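(* In the monoid $M$ defined below, the set $I=C\cup D\cup E\cup\{0\}$, where $C=\{a^pc_i:p,i\in\mathbb{Z}\}$, $D=\{a^pd:p\in\mathbb{Z}\}$, $E=\{a^pe:p\in\mathbb{Z}\}$, is an rf-compatible ideal of $M$, and $N=(M\setminus I)\cup\{0\}=\{a^p\}\cup\{a^pb_i\}\cup\{0\}$ is a submonoid of $M$.
   Context: Let $\tau:\mathbb{Z}\setminus\{0\}\to\mathbb{Z}$, $\tau(2^k(2r+1))=\frac{2}{3}(2^{2\lceil k/2\rceil}-1)$ ($k,r\in\mathbb{Z}$, $k\ge0$). Let $M$ be the commutative monoid with zero $0$ given by generators $a,a^{-1},b_i,c_i$ ($i\in\mathbb{Z}$), $d,e$ and relations $aa^{-1}=a^{-1}a=1$; $b_ic_j=d$ if $i=j$ and $b_ic_j=a^{\tau(j-i)}e$ if $i\neq j$; and $b_ib_j=b_id=b_ie=c_jc_k=c_jd=c_je=dd=de=ee=0$ for all $i,j,k\in\mathbb{Z}$. Its elements have distinct normal forms $a^p$, $a^pb_i$, $a^pc_i$, $a^pd$, $a^pe$ ($p,i\in\mathbb{Z}$) and $0$. An ideal $I$ of a monoid $M$ is rf-compatible with $M$ if for any two distinct $s,t\in I$ there is a congruence $\rho$ of finite index on $I$ with $s/\rho\neq t/\rho$ such that $\rho\cup\Delta_M$ is a congruence on $M$, where $\Delta_M=\{(x,x):x\in M\}$. *)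

theory Defs
  imports "HOL-Computational_Algebra.Primes"
begin

text \<open>tau(2^k(2r+1)) = (2/3)(2^(2 ceil(k/2)) - 1); k is the 2-adic valuation.
  The value at 0 is irrelevant (only tau(j-i) with i ~= j is used).\<close>
definition tau :: "int \<Rightarrow> int" where
  "tau n = (let k = multiplicity (2::int) n in 2 * (2 ^ (2 * ((k + 1) div 2)) - 1) div 3)"

text \<open>Elements of M via their normal forms:
  Apow p = a^p, Bel p i = a^p b_i, Cel p i = a^p c_i, Del p = a^p d, Eel p = a^p e, Zero = 0.\<close>
datatype melem = Apow int | Bel int int | Cel int int | Del int | Eel int | Zero

fun mmul :: "melem \<Rightarrow> melem \<Rightarrow> melem" where
  "mmul Zero y = Zero"
| "mmul x Zero = Zero"
| "mmul (Apow p) (Apow q) = Apow (p + q)"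
| "mmul (Apow p) (Bel q i) = Bel (p + q) i"
| "mmul (Apow p) (Cel q i) = Cel (p + q) i"
| "mmul (Apow p) (Del q) = Del (p + q)"
| "mmul (Apow p) (Eel q) = Eel (p + q)"
| "mmul (Bel q i) (Apow p) = Bel (p + q) i"
| "mmul (Cel q i) (Apow p) = Cel (p + q) i"
| "mmul (Del q) (Apow p) = Del (p + q)"
| "mmul (Eel q) (Apow p) = Eel (p + q)"
| "mmul (Bel p i) (Cel q j) = (if i = j then Del (p + q) else Eel (p + q + tau (j - i)))"
| "mmul (Cel q j) (Bel p i) = (if i = j then Del (p + q) else Eel (p + q + tau (j - i)))"
| "mmul x y = Zero"

definition mone :: melem where "mone = Apow 0"

definition Cset :: "melem set" where "Cset = {Cel p i | p i. True}"
definition Dset :: "melem set" where "Dset = {Del p | p. True}"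
definition Eset :: "melem set" where "Eset = {Eel p | p. True}"
definition Iset :: "melem set" where "Iset = Cset \<union> Dset \<union> Eset \<union> {Zero}"
definition Nset :: "melem set" where "Nset = (UNIV - Iset) \<union> {Zero}"

definition is_ideal :: "('a \<Rightarrow> 'a \<Rightarrow> 'a) \<Rightarrow> 'a set \<Rightarrow> bool" where
  "is_ideal mul I \<longleftrightarrow> I \<noteq> {} \<and> (\<forall>x\<in>I. \<forall>m. mul m x \<in> I \<and> mul x m \<in> I)"

definition is_congruence_on :: "('a \<Rightarrow> 'a \<Rightarrow> 'a) \<Rightarrow> 'a set \<Rightarrow> ('a \<times> 'a) set \<Rightarrow> bool" where
  "is_congruence_on mul S \<rho> \<longleftrightarrow> equiv S \<rho> \<and>
     (\<forall>x y u v. (x, y) \<in> \<rho> \<longrightarrow> (u, v) \<in> \<rho> \<longrightarrow> (mul x u, mul y v) \<in> \<rho>)"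

definition rf_compatible :: "('a \<Rightarrow> 'a \<Rightarrow> 'a) \<Rightarrow> 'a set \<Rightarrow> bool" where
  "rf_compatible mul I \<longleftrightarrow>
     (\<forall>s\<in>I. \<forall>t\<in>I. s \<noteq> t \<longrightarrow>
        (\<exists>\<rho>. is_congruence_on mul I \<rho> \<and> finite (I // \<rho>) \<and> (s, t) \<notin> \<rho> \<and>
              is_congruence_on mul UNIV (\<rho> \<union> Id)))"

definition is_submonoid :: "('a \<Rightarrow> 'a \<Rightarrow> 'a) \<Rightarrow> 'a \<Rightarrow> 'a set \<Rightarrow> bool" where
  "is_submonoid mul one N \<longleftrightarrow> one \<in> N \<and> (\<forall>x\<in>N. \<forall>y\<in>N. mul x y \<in> N)"

end

theory Submission imports Defs begin

(* That I is an ideal and N a submonoid is a finite check on normal forms.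
   For rf-compatibility we use kernels of maps: if f respects multiplication, is injective
   outside I, and takes finitely many values on I, then its kernel restricted to I is a
   congruence of finite index on I whose union with the diagonal is a congruence on M.
   So it suffices to separate any two distinct elements of I by such a map.
   The maps are "reductions modulo 2^n": a^p c_i is sent to (p mod 2^n, i mod 2^n), and
   a^p d, a^p e are sent to 3p-2 resp. 3p modulo 2^n, i.e. d is identified 2-adically with
   a^(-2/3) e.  This respects the product b_i c_j because 3 tau(x) tends 2-adically to -2
   as x tends to 0, and more precisely x |-> (if x = 0 then -2 else 3 tau x) is 2-adically
   1-Lipschitz (lemma tau_ext_cong).  Distinct elements of I are separated for large n. *)

section \<open>The 2-adic behaviour of tau\<close>

text \<open>Three times tau, extended to 0 by its 2-adic limit -2.\<close>
definition tau_ext :: "int \<Rightarrow> int" where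
  "tau_ext x = (if x = 0 then -2 else 3 * tau x)"

text \<open>Used to see that tau is integral, via the closed form below.\<close>
lemma three_dvd_four_pow_minus_one: "(3::int) dvd 4 ^ c - 1"
proof (induction c)
  case (Suc c)
  have "(4::int) ^ Suc c - 1 = 4 * (4 ^ c - 1) + 3" by simp
  with Suc show ?case by presburger
qed simp

text \<open>The closed form behind the definition: 3 tau x + 2 is a power of two whose exponent
  exceeds the 2-adic valuation of x.\<close>
lemma three_tau: "3 * tau x = 2 ^ (2 * ((multiplicity 2 x + 1) div 2) + 1) - 2"
proof -
  define c where "c = (multiplicity (2::int) x + 1) div 2"
  have four: "(2::int) ^ (2 * c) = 4 ^ c" by (simp add: power_mult)
  obtain r where r: "4 ^ c - 1 = 3 * (r::int)" using three_dvd_four_pow_minus_one[of c] by blast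
  have "tau x = 2 * r" unfolding tau_def Let_def c_def[symmetric] four r by simp
  thus ?thesis unfolding c_def[symmetric] using four r by simp
qed

lemma pow2_dvd_tau_ext_plus_two:
  assumes "(2::int) ^ n dvd x"
  shows "2 ^ n dvd tau_ext x + 2"
proof (cases "x = 0")
  case False
  have "n \<le> multiplicity 2 x" using multiplicity_geI[OF False _ assms] by simp
  hence "(2::int) ^ n dvd 2 ^ (2 * ((multiplicity 2 x + 1) div 2) + 1)"
    by (intro le_imp_power_dvd) linarith
  thus ?thesis using False by (simp add: tau_ext_def three_tau)
qed (simp add: tau_ext_def)

lemma multiplicity_eq_if_dvd_diff:
  fixes p x y :: int
  assumes not_dvd: "\<not> p ^ n dvd x" and cong: "p ^ n dvd x - y"
  shows "multiplicity p x = multiplicity p y"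
proof -
  have unit: "\<not> is_unit p"
  proof
    assume "is_unit p"
    hence "is_unit (p ^ n)" using is_unit_power_iff by blast
    thus False using not_dvd unit_imp_dvd by blast
  qed
  have xp: "x \<noteq> 0" "\<not> is_unit p" using not_dvd unit by auto
  define k where "k = multiplicity p x"
  have "k < n" unfolding k_def using multiplicity_lessI[OF xp not_dvd] .
  have dvd_k: "p ^ k dvd x - y"
    using \<open>k < n\<close> by (intro dvd_trans[OF le_imp_power_dvd cong]) simp
  have dvd_Suc_k: "p ^ Suc k dvd x - y"
    using \<open>k < n\<close> by (intro dvd_trans[OF le_imp_power_dvd cong]) simp
  have "p ^ k dvd x" unfolding k_def by (rule multiplicity_dvd)
  hence "p ^ k dvd y" using dvd_diff[OF _ dvd_k] by fastforce
  moreover have "\<not> p ^ Suc k dvd y"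
  proof
    assume "p ^ Suc k dvd y"
    hence "p ^ Suc k dvd x" using dvd_add[OF dvd_Suc_k] by fastforce
    thus False using power_dvd_iff_le_multiplicity[OF xp, of "Suc k"] k_def by simp
  qed
  ultimately show ?thesis unfolding k_def[symmetric] by (rule multiplicity_eqI[symmetric])
qed

lemma tau_ext_cong:
  assumes cong: "(2::int) ^ n dvd x - y"
  shows "2 ^ n dvd tau_ext x - tau_ext y"
proof (cases "2 ^ n dvd x")
  case True
  hence "2 ^ n dvd y" using dvd_diff[OF _ cong] by fastforce
  hence "2 ^ n dvd (tau_ext x + 2) - (tau_ext y + 2)"
    using True by (intro dvd_diff pow2_dvd_tau_ext_plus_two)
  thus ?thesis by simp
next
  case False
  have "\<not> 2 ^ n dvd y" using False dvd_add[OF cong] by fastforce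
  hence "x \<noteq> 0" "y \<noteq> 0" using False by auto
  moreover have "multiplicity 2 x = multiplicity 2 y"
    using False cong by (rule multiplicity_eq_if_dvd_diff)
  ultimately show ?thesis by (simp add: tau_ext_def three_tau)
qed

lemma int_eq_if_cong_all_pow2:
  assumes "\<And>n. (a::int) mod 2 ^ n = b mod 2 ^ n"
  shows "a = b"
proof (rule ccontr)
  assume "a \<noteq> b"
  define n where "n = nat \<bar>a - b\<bar>"
  have "2 ^ n dvd a - b" using assms by (simp add: mod_eq_dvd_iff)
  hence "\<bar>(2::int) ^ n\<bar> \<le> \<bar>a - b\<bar>" using \<open>a \<noteq> b\<close> by (intro dvd_imp_le_int) auto
  moreover have "int n < 2 ^ n"
    using less_exp[of n] by (simp add: of_nat_less_iff[symmetric])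
  ultimately show False unfolding n_def by simp
qed

section \<open>rf-compatibility from separating kernels\<close>

definition respects_mul :: "('a \<Rightarrow> 'a \<Rightarrow> 'a) \<Rightarrow> ('a \<Rightarrow> 'b) \<Rightarrow> bool" where
  "respects_mul mul f \<longleftrightarrow> (\<forall>x y u v. f x = f y \<longrightarrow> f u = f v \<longrightarrow> f (mul x u) = f (mul y v))"

definition kernel_on :: "'a set \<Rightarrow> ('a \<Rightarrow> 'b) \<Rightarrow> ('a \<times> 'a) set" where
  "kernel_on I f = {(x, y). x \<in> I \<and> y \<in> I \<and> f x = f y}"

lemma kernel_on_congruence:
  assumes "respects_mul mul f" and "\<And>x y. x \<in> I \<Longrightarrow> y \<in> I \<Longrightarrow> mul x y \<in> I"
  shows "is_congruence_on mul I (kernel_on I f)"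
  unfolding is_congruence_on_def
proof (intro conjI allI impI)
  show "equiv I (kernel_on I f)"
    by (intro equivI refl_onI symI transI) (auto simp: kernel_on_def)
  fix x y u v assume "(x, y) \<in> kernel_on I f" "(u, v) \<in> kernel_on I f"
  thus "(mul x u, mul y v) \<in> kernel_on I f"
    using assms unfolding respects_mul_def kernel_on_def by blast
qed

lemma kernel_on_union_Id:
  assumes inj_outside: "\<And>x y. f x = f y \<Longrightarrow> x \<notin> I \<Longrightarrow> x = y"
  shows "kernel_on I f \<union> Id = {(x, y). f x = f y}"
proof (intro equalityI subsetI)
  fix z assume "z \<in> {(x, y). f x = f y}"
  then obtain x y where z: "z = (x, y)" and same: "f x = f y" by blast
  show "z \<in> kernel_on I f \<union> Id"
  proof (cases "x \<in> I \<and> y \<in> I")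
    case True
    thus ?thesis using z same unfolding kernel_on_def by simp
  next
    case False
    hence "x = y" using inj_outside same by metis
    thus ?thesis using z by simp
  qed
qed (auto simp: kernel_on_def)

lemma kernel_congruence:
  assumes "respects_mul mul f"
  shows "is_congruence_on mul UNIV {(x, y). f x = f y}"
  unfolding is_congruence_on_def
proof (intro conjI allI impI)
  show "equiv UNIV {(x, y). f x = f y}"
    by (intro equivI refl_onI symI transI) auto
qed (use assms in \<open>unfold respects_mul_def, blast\<close>)

text \<open>Classes of the kernel on I correspond to values of f on I.\<close>
lemma finite_quotient_kernel_on:
  assumes "finite (f ` I)"
  shows "finite (I // kernel_on I f)"
proof -
  have "I // kernel_on I f \<subseteq> (\<lambda>k. {y \<in> I. k = f y}) ` (f ` I)"
  proof
    fix c assume "c \<in> I // kernel_on I f"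
    then obtain x where "x \<in> I" "c = {y \<in> I. f x = f y}"
      unfolding quotient_def kernel_on_def by auto
    thus "c \<in> (\<lambda>k. {y \<in> I. k = f y}) ` (f ` I)" by blast
  qed
  thus ?thesis using assms by (rule finite_subset[OF _ finite_imageI])
qed

lemma rf_compatible_if_separated:
  assumes closed: "\<And>x y. x \<in> I \<Longrightarrow> y \<in> I \<Longrightarrow> mul x y \<in> I"
    and separated: "\<And>s t. s \<in> I \<Longrightarrow> t \<in> I \<Longrightarrow> s \<noteq> t \<Longrightarrow>
      \<exists>f :: 'a \<Rightarrow> 'b. respects_mul mul f \<and> (\<forall>x y. f x = f y \<longrightarrow> x \<notin> I \<longrightarrow> x = y) \<and>
        finite (f ` I) \<and> f s \<noteq> f t"
  shows "rf_compatible mul I"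
  unfolding rf_compatible_def
proof (intro ballI impI)
  fix s t assume "s \<in> I" "t \<in> I" "s \<noteq> t"
  then obtain f :: "'a \<Rightarrow> 'b" where f: "respects_mul mul f" "\<forall>x y. f x = f y \<longrightarrow> x \<notin> I \<longrightarrow> x = y"
      "finite (f ` I)" "f s \<noteq> f t"
    using separated by blast
  have "is_congruence_on mul UNIV (kernel_on I f \<union> Id)"
    using kernel_congruence[OF f(1)] kernel_on_union_Id[of f I] f(2) by simp
  moreover have "(s, t) \<notin> kernel_on I f" using f(4) unfolding kernel_on_def by simp
  ultimately show "\<exists>\<rho>. is_congruence_on mul I \<rho> \<and> finite (I // \<rho>) \<and> (s, t) \<notin> \<rho> \<and>
      is_congruence_on mul UNIV (\<rho> \<union> Id)"
    using kernel_on_congruence[OF f(1) closed] finite_quotient_kernel_on[OF f(3)] by blast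
qed

text \<open>M is commutative, so compatibility need only be checked on one side.\<close>
lemma mmul_comm: "mmul x y = mmul y x"
  by (cases x; cases y) auto

fun in_I :: "melem \<Rightarrow> bool" where
  "in_I (Apow p) = False"
| "in_I (Bel p i) = False"
| "in_I _ = True"

lemma Iset_eq: "Iset = {x. in_I x}"
  unfolding Iset_def Cset_def Dset_def Eset_def by (auto elim: in_I.elims)

text \<open>I absorbs multiplication; with commutativity this makes I an ideal.\<close>
lemma in_I_mmul: "in_I x \<Longrightarrow> in_I (mmul x m)"
  by (cases x; cases m) auto

lemma ideal_Iset: "is_ideal mmul Iset"
  unfolding is_ideal_def Iset_eq using in_I_mmul mmul_comm by (auto intro: exI[of _ Zero])

lemma submonoid_Nset: "is_submonoid mmul mone Nset"
proof -
  have N: "x \<in> Nset \<longleftrightarrow> x = Zero \<or> \<not> in_I x" for x unfolding Nset_def Iset_eq by auto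
  have "mmul x y \<in> Nset" if "x \<in> Nset" "y \<in> Nset" for x y
    using that unfolding N by (cases x; cases y) auto
  moreover have "Apow 0 \<in> Nset" unfolding N by simp
  ultimately show ?thesis unfolding is_submonoid_def mone_def by blast
qed

section \<open>Reduction modulo powers of two\<close>

text \<open>Values of the reduction maps: a class of C, a weight class of D \<union> E, zero, or
  (unchanged) an element outside I.\<close>
datatype key = KeyC int int | KeyW int | KeyZero | KeyOut melem

fun reduce :: "nat \<Rightarrow> melem \<Rightarrow> key" where
  "reduce n (Cel p i) = KeyC (p mod 2 ^ n) (i mod 2 ^ n)"
| "reduce n (Del p) = KeyW ((3 * p - 2) mod 2 ^ n)"
| "reduce n (Eel p) = KeyW ((3 * p) mod 2 ^ n)"
| "reduce n Zero = KeyZero"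
| "reduce n x = KeyOut x"

lemma reduce_Cel_Bel:
  "reduce n (mmul (Cel p i) (Bel q k)) = KeyW ((3 * (p + q) + tau_ext (i - k)) mod 2 ^ n)"
  by (simp add: tau_ext_def algebra_simps)

lemma reduce_Cel_Bel_cong:
  assumes "p mod 2 ^ n = p' mod 2 ^ n" "i mod 2 ^ n = i' mod 2 ^ n"
  shows "reduce n (mmul (Cel p i) (Bel q k)) = reduce n (mmul (Cel p' i') (Bel q k))"
proof -
  have "2 ^ n dvd p - p'" using assms(1) by (simp add: mod_eq_dvd_iff)
  hence "2 ^ n dvd 3 * (p - p')" by (rule dvd_mult)
  moreover have "2 ^ n dvd tau_ext (i - k) - tau_ext (i' - k)"
    using assms(2) by (intro tau_ext_cong) (simp add: mod_eq_dvd_iff)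
  ultimately have "2 ^ n dvd 3 * (p - p') + (tau_ext (i - k) - tau_ext (i' - k))"
    by (rule dvd_add)
  hence "2 ^ n dvd (3 * (p + q) + tau_ext (i - k)) - (3 * (p' + q) + tau_ext (i' - k))"
    by (simp add: algebra_simps)
  thus ?thesis unfolding reduce_Cel_Bel by (simp add: mod_eq_dvd_iff)
qed

lemma reduce_mmul_right:
  assumes "reduce n x = reduce n y"
  shows "reduce n (mmul x m) = reduce n (mmul y m)"
proof (cases x)
  case (Cel p i)
  then obtain p' i' where y: "y = Cel p' i'" "p mod 2 ^ n = p' mod 2 ^ n" "i mod 2 ^ n = i' mod 2 ^ n"
    using assms by (cases y) auto
  show ?thesis
  proof (cases m)
    case (Apow q)
    thus ?thesis using Cel y by (simp add: mod_eq_dvd_iff)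
  next
    case (Bel q k)
    thus ?thesis using Cel y reduce_Cel_Bel_cong[OF y(2,3)] by simp
  qed (simp_all add: Cel y)
next
  case (Del p)
  thus ?thesis using assms
    by (cases y; cases m) (simp_all add: mod_eq_dvd_iff algebra_simps)
next
  case (Eel p)
  thus ?thesis using assms
    by (cases y; cases m) (simp_all add: mod_eq_dvd_iff algebra_simps)
qed (use assms in \<open>cases y; simp_all\<close>)+

lemma reduce_respects_mul: "respects_mul mmul (reduce n)"
  unfolding respects_mul_def
proof (intro allI impI)
  fix x y u v assume xy: "reduce n x = reduce n y" and uv: "reduce n u = reduce n v"
  have "reduce n (mmul x u) = reduce n (mmul y u)" using xy by (rule reduce_mmul_right)
  also have "\<dots> = reduce n (mmul v y)"
    using reduce_mmul_right[OF uv, of y] by (simp only: mmul_comm)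
  finally show "reduce n (mmul x u) = reduce n (mmul y v)" by (simp only: mmul_comm)
qed

lemma reduce_injective_outside:
  "reduce n x = reduce n y \<Longrightarrow> \<not> in_I x \<Longrightarrow> x = y"
  by (cases x; cases y) auto

lemma finite_reduce_image: "finite (reduce n ` Iset)"
proof -
  let ?S = "{0..<(2::int) ^ n}"
  have "reduce n ` Iset \<subseteq> case_prod KeyC ` (?S \<times> ?S) \<union> KeyW ` ?S \<union> {KeyZero}"
  proof
    fix k assume "k \<in> reduce n ` Iset"
    then obtain x where "in_I x" "k = reduce n x" unfolding Iset_eq by auto
    moreover have "a mod 2 ^ n \<in> ?S" for a :: int by simp
    ultimately show "k \<in> case_prod KeyC ` (?S \<times> ?S) \<union> KeyW ` ?S \<union> {KeyZero}"
      by (cases x) (auto simp del: atLeastLessThan_iff)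
  qed
  thus ?thesis by (rule finite_subset) simp
qed

lemma reduce_separates:
  assumes "in_I s" "in_I t" and same: "\<And>n. reduce n s = reduce n t"
  shows "s = t"
proof -
  have no_weight_clash: "3 * p - 2 \<noteq> 3 * q" for p q :: int by presburger
  show ?thesis
  proof (cases s)
    case (Cel p i)
    then obtain p' i' where t: "t = Cel p' i'" using same[of 0] by (cases t) auto
    have "p = p'" "i = i'"
      by (rule int_eq_if_cong_all_pow2, use same[unfolded Cel t] in simp)+
    thus ?thesis using Cel t by simp
  next
    case (Del p)
    show ?thesis
    proof (cases t)
      case (Del p')
      have "3 * p - 2 = 3 * p' - 2"
        by (rule int_eq_if_cong_all_pow2) (use same[unfolded \<open>s = Del p\<close> Del] in simp)
      thus ?thesis using \<open>s = Del p\<close> Del by simp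
    next
      case (Eel p')
      have "3 * p - 2 = 3 * p'"
        by (rule int_eq_if_cong_all_pow2) (use same[unfolded \<open>s = Del p\<close> Eel] in simp)
      thus ?thesis using no_weight_clash by simp
    qed (use same[of 0] Del assms(2) in simp_all)
  next
    case (Eel p)
    show ?thesis
    proof (cases t)
      case (Del p')
      have "3 * p' - 2 = 3 * p"
        by (rule int_eq_if_cong_all_pow2) (use same[unfolded \<open>s = Eel p\<close> Del] in simp)
      thus ?thesis using no_weight_clash by simp
    next
      case (Eel p')
      have "3 * p = 3 * p'"
        by (rule int_eq_if_cong_all_pow2) (use same[unfolded \<open>s = Eel p\<close> Eel] in simp)
      thus ?thesis using \<open>s = Eel p\<close> Eel by simp
    qed (use same[of 0] Eel assms(2) in simp_all)
  qed (use same[of 0] assms in \<open>cases t; simp\<close>)+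
qed

theorem mainTheorem16:
  shows "is_ideal mmul Iset \<and> rf_compatible mmul Iset \<and> is_submonoid mmul mone Nset"
proof (intro conjI ideal_Iset submonoid_Nset)
  show "rf_compatible mmul Iset"
  proof (rule rf_compatible_if_separated[where 'b = key])
    show "mmul x y \<in> Iset" if "x \<in> Iset" "y \<in> Iset" for x y
      using that in_I_mmul unfolding Iset_eq by simp
    fix s t assume "s \<in> Iset" "t \<in> Iset" "s \<noteq> t"
    then obtain n where "reduce n s \<noteq> reduce n t"
      using reduce_separates[of s t] unfolding Iset_eq by blast
    moreover have "\<forall>x y. reduce n x = reduce n y \<longrightarrow> x \<notin> Iset \<longrightarrow> x = y"
      using reduce_injective_outside unfolding Iset_eq by blast
    ultimately show "\<exists>f :: melem \<Rightarrow> key. respects_mul mmul f \<and>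
        (\<forall>x y. f x = f y \<longrightarrow> x \<notin> Iset \<longrightarrow> x = y) \<and> finite (f ` Iset) \<and> f s \<noteq> f t"
      using reduce_respects_mul[of n] finite_reduce_image[of n] by (intro exI[of _ "reduce n"]) simp
  qed
qed

end
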